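(* Let $K\ge1$, $n\ge1$. Let $y_1,\dots,y_n$ be data and let $p^p_1,\dots,p^p_K$ be the predictive densities obtained by fitting $K$ models to these data; let $\tilde y_1,\dots,\tilde y_n$ be i.i.d. new draws from the data-generating distribution $Q$, with $y\sim Q$ a generic draw and $\mathrm{E}$ the expectation under $Q$ (with the fitted densities held fixed). Define the optimism $op_k=-\sum_i\log p^p_k(\tilde y_i)+\sum_i\log p^p_k(y_i)$, the weights $w^{op}_k=e^{-op_k}/\sum_j e^{-op_j}$, the overfitting ratios $m_k=\frac{\sum_i-\log p^p_k(\tilde y_i)}{\sum_i-\log p^p_k(y_i)}$ and $m=\min_k m_k$, and $$\phi_{term}=\log\frac1K\sum_k\mathrm{E}\Big[e^{\sum_i\log p^p_k(\tilde y_i)-n\mathrm{E}[\log p^p_k(y)]}\Big].$$ Assume $\sum_i-\log p^p_k(y_i)>0$ for each $k$ and $m>1$. Then for any $\delta\in(0,1]$, with probability at least $1-\delta$, simultaneously for all $w^p\in S^K$: $$n\,\mathrm{E}\Big[-\log\sum_kw^p_kp^p_k(y)\Big]\le\frac{m}{m-1}\sum_kw^p_k\log\frac{w^p_k}{w^{op}_k}-\frac{1}{m-1}\sum_kw^p_k\log w^p_k+\log K-\frac{m}{m-1}\log\sum_ke^{-op_k}-\log\delta+\phi_{term}.$$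
   Context: $S^K$ is the set of probability vectors with $K$ components; $0\log 0=0$. *)

theory Defs
  imports "HOL-Probability.Probability"
begin

definition prob_simplex :: "nat \<Rightarrow> (nat \<Rightarrow> real) set" where
  "prob_simplex K = {w. (\<forall>k<K. 0 \<le> w k) \<and> (\<Sum>k<K. w k) = 1}"

definition optimism :: "nat \<Rightarrow> (nat \<Rightarrow> 'a \<Rightarrow> real) \<Rightarrow> (nat \<Rightarrow> 'a) \<Rightarrow> (nat \<Rightarrow> 'a) \<Rightarrow> nat \<Rightarrow> real" where
  "optimism n p y yt k = - (\<Sum>i<n. ln (p k (yt i))) + (\<Sum>i<n. ln (p k (y i)))"

definition w_op :: "nat \<Rightarrow> nat \<Rightarrow> (nat \<Rightarrow> 'a \<Rightarrow> real) \<Rightarrow> (nat \<Rightarrow> 'a) \<Rightarrow> (nat \<Rightarrow> 'a) \<Rightarrow> nat \<Rightarrow> real" where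
  "w_op K n p y yt k = exp (- optimism n p y yt k) / (\<Sum>j<K. exp (- optimism n p y yt j))"

definition overfit_ratio :: "nat \<Rightarrow> (nat \<Rightarrow> 'a \<Rightarrow> real) \<Rightarrow> (nat \<Rightarrow> 'a) \<Rightarrow> (nat \<Rightarrow> 'a) \<Rightarrow> nat \<Rightarrow> real" where
  "overfit_ratio n p y yt k = (\<Sum>i<n. - ln (p k (yt i))) / (\<Sum>i<n. - ln (p k (y i)))"

definition overfit_min :: "nat \<Rightarrow> nat \<Rightarrow> (nat \<Rightarrow> 'a \<Rightarrow> real) \<Rightarrow> (nat \<Rightarrow> 'a) \<Rightarrow> (nat \<Rightarrow> 'a) \<Rightarrow> real" where
  "overfit_min K n p y yt = Min ((\<lambda>k. overfit_ratio n p y yt k) ` {..<K})"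

definition phi_integrand :: "'a measure \<Rightarrow> nat \<Rightarrow> (nat \<Rightarrow> 'a \<Rightarrow> real) \<Rightarrow> nat \<Rightarrow> (nat \<Rightarrow> 'a) \<Rightarrow> real" where
  "phi_integrand Q n p k yt =
     exp ((\<Sum>i<n. ln (p k (yt i))) - real n * (\<integral>x. ln (p k x) \<partial>Q))"

definition phi_term :: "'a measure \<Rightarrow> nat \<Rightarrow> nat \<Rightarrow> (nat \<Rightarrow> 'a \<Rightarrow> real) \<Rightarrow> real" where
  "phi_term Q K n p =
     ln ((1 / real K) * (\<Sum>k<K. \<integral>yt. phi_integrand Q n p k yt \<partial>(PiM {..<n} (\<lambda>_. Q))))"

end

theory Submission
  imports Defs
begin

(* By concavity of the logarithm the risk of the mixture is at most the w-average of the
   risks R_k = n E[-log p_k].  The finite Gibbs (Donsker-Varadhan) inequality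
     sum_k w_k (a_k - log w_k) <= log sum_k exp a_k,
   applied with a_k = R_k - T_k where T_k is the loss on the new draws, trades the average of
   R_k - T_k for log sum_k exp (R_k - T_k); this sum is the sum of the phi integrands, whose
   expectation is K exp phi_term, so by Markov's inequality it is at most K exp phi_term / delta
   with probability at least 1 - delta.  Finally m L_k <= T_k, with L_k the training loss, gives
   T_k <= m/(m-1) op_k, and the w-average of op_k equals relative entropy to w^op minus
   entropy minus log sum_k exp (-op_k). *)

lemma weighted_ln_le_ln_weighted_sum:
  fixes w c :: "'i \<Rightarrow> real"
  assumes "finite I" "\<And>k. k \<in> I \<Longrightarrow> 0 \<le> w k" "(\<Sum>k\<in>I. w k) = 1"
    and "\<And>k. k \<in> I \<Longrightarrow> 0 < c k"
  shows "(\<Sum>k\<in>I. w k * ln (c k)) \<le> ln (\<Sum>k\<in>I. w k * c k)"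
proof -
  have "I \<noteq> {}" using assms(3) by auto
  then show ?thesis
    using concave_on_sum[OF assms(1) _ ln_concave assms(3), of c] assms(2,4) by simp
qed

lemma weighted_sum_minus_ln_le_ln_sum_exp:
  fixes w a :: "'i \<Rightarrow> real"
  assumes fin: "finite I" and w0: "\<And>k. k \<in> I \<Longrightarrow> 0 \<le> w k" and w1: "(\<Sum>k\<in>I. w k) = 1"
  shows "(\<Sum>k\<in>I. w k * (a k - ln (w k))) \<le> ln (\<Sum>k\<in>I. exp (a k))"
proof -
  define J where "J = {k \<in> I. 0 < w k}"
  have J: "finite J" "J \<subseteq> I" using fin by (auto simp: J_def)
  have off_J: "w k = 0" if "k \<in> I - J" for k
    using that w0 by (force simp: J_def)
  have wJ: "(\<Sum>k\<in>J. w k) = 1"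
    using w1 sum.mono_neutral_right[OF fin J(2), of w] off_J by simp
  have "(\<Sum>k\<in>I. w k * (a k - ln (w k))) = (\<Sum>k\<in>J. w k * (a k - ln (w k)))"
    by (rule sum.mono_neutral_right[OF fin J(2)]) (simp add: off_J)
  also have "\<dots> = (\<Sum>k\<in>J. w k * ln (exp (a k) / w k))"
    by (intro sum.cong refl) (simp add: J_def ln_div)
  also have "\<dots> \<le> ln (\<Sum>k\<in>J. w k * (exp (a k) / w k))"
    using J(1) wJ by (intro weighted_ln_le_ln_weighted_sum) (auto simp: J_def)
  also have "\<dots> = ln (\<Sum>k\<in>J. exp (a k))"
    by (auto intro!: arg_cong[where f = ln] sum.cong simp: J_def)
  also have "\<dots> \<le> ln (\<Sum>k\<in>I. exp (a k))"
  proof -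
    have "J \<noteq> {}" using wJ by auto
    then have "0 < (\<Sum>k\<in>J. exp (a k))" using J(1) by (intro sum_pos) auto
    moreover have "(\<Sum>k\<in>J. exp (a k)) \<le> (\<Sum>k\<in>I. exp (a k))"
      using fin J(2) by (intro sum_mono2) auto
    ultimately show ?thesis by simp
  qed
  finally show ?thesis .
qed

lemma sum_weighted_ln_div_softmax:
  fixes w a :: "'i \<Rightarrow> real"
  assumes fin: "finite I" and w0: "\<And>k. k \<in> I \<Longrightarrow> 0 \<le> w k" and w1: "(\<Sum>k\<in>I. w k) = 1"
  shows "(\<Sum>k\<in>I. w k * ln (w k / (exp (- a k) / (\<Sum>j\<in>I. exp (- a j)))))
    = (\<Sum>k\<in>I. w k * ln (w k)) + (\<Sum>k\<in>I. w k * a k) + ln (\<Sum>j\<in>I. exp (- a j))"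
proof -
  define S where "S = (\<Sum>j\<in>I. exp (- a j))"
  have "I \<noteq> {}" using w1 by auto
  then have "0 < S" unfolding S_def using fin by (intro sum_pos) auto
  have "w k * ln (w k / (exp (- a k) / S)) = w k * ln (w k) + w k * a k + w k * ln S"
    if "k \<in> I" for k
  proof (cases "w k = 0")
    case False
    then have "0 < w k" using w0[OF that] by simp
    then show ?thesis using \<open>0 < S\<close> by (simp add: ln_div ln_mult algebra_simps)
  qed simp
  then have "(\<Sum>k\<in>I. w k * ln (w k / (exp (- a k) / S)))
      = (\<Sum>k\<in>I. w k * ln (w k)) + (\<Sum>k\<in>I. w k * a k) + (\<Sum>k\<in>I. w k) * ln S"
    by (simp add: sum.distrib sum_distrib_right)
  then show ?thesis using w1 unfolding S_def by simp
qed

(* R k, T k, L k play the risk, the test loss and the training loss of model k; a k is its optimism. *)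
lemma weighted_sum_le_softmax_divergence_bound:
  fixes w R T L a :: "'i \<Rightarrow> real" and m :: real
  assumes fin: "finite I" and w0: "\<And>k. k \<in> I \<Longrightarrow> 0 \<le> w k" and w1: "(\<Sum>k\<in>I. w k) = 1"
    and "1 < m" and a: "\<And>k. k \<in> I \<Longrightarrow> a k = T k - L k"
    and ratio: "\<And>k. k \<in> I \<Longrightarrow> m * L k \<le> T k"
  shows "(\<Sum>k\<in>I. w k * R k)
    \<le> m / (m - 1) * (\<Sum>k\<in>I. w k * ln (w k / (exp (- a k) / (\<Sum>j\<in>I. exp (- a j)))))
      - 1 / (m - 1) * (\<Sum>k\<in>I. w k * ln (w k))
      - m / (m - 1) * ln (\<Sum>j\<in>I. exp (- a j))
      + ln (\<Sum>k\<in>I. exp (R k - T k))"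
proof -
  define H where "H = (\<Sum>k\<in>I. w k * ln (w k))"
  define A where "A = (\<Sum>k\<in>I. w k * a k)"
  define S where "S = (\<Sum>j\<in>I. exp (- a j))"
  have "(\<Sum>k\<in>I. w k * R k) - (\<Sum>k\<in>I. w k * T k) - H = (\<Sum>k\<in>I. w k * (R k - T k - ln (w k)))"
    unfolding H_def by (simp add: algebra_simps sum_subtractf sum.distrib)
  also have "\<dots> \<le> ln (\<Sum>k\<in>I. exp (R k - T k))"
    using fin w0 w1 by (rule weighted_sum_minus_ln_le_ln_sum_exp)
  finally have gibbs: "(\<Sum>k\<in>I. w k * R k) \<le> (\<Sum>k\<in>I. w k * T k) + H + ln (\<Sum>k\<in>I. exp (R k - T k))"
    by simp
  have "(\<Sum>k\<in>I. w k * T k) \<le> m / (m - 1) * A"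
    unfolding A_def sum_distrib_left
  proof (intro sum_mono)
    fix k assume k: "k \<in> I"
    have "(m - 1) * T k \<le> m * a k"
      using ratio[OF k] by (simp add: a[OF k] algebra_simps)
    then have "T k \<le> m / (m - 1) * a k"
      using \<open>1 < m\<close> by (simp add: field_simps)
    then have "w k * T k \<le> w k * (m / (m - 1) * a k)"
      using w0[OF k] by (rule mult_left_mono)
    then show "w k * T k \<le> m / (m - 1) * (w k * a k)"
      by (simp only: mult.left_commute)
  qed
  then have "(\<Sum>k\<in>I. w k * R k) \<le> m / (m - 1) * A + H + ln (\<Sum>k\<in>I. exp (R k - T k))"
    using gibbs by linarith
  also have "m / (m - 1) * A + H
      = m / (m - 1) * (H + A + ln S) - 1 / (m - 1) * H - m / (m - 1) * ln S"
  proof -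
    have "m / (m - 1) = 1 + 1 / (m - 1)"
      using \<open>1 < m\<close> by (simp add: field_simps)
    then show ?thesis by (simp add: algebra_simps add_divide_distrib)
  qed
  also have "H + A + ln S = (\<Sum>k\<in>I. w k * ln (w k / (exp (- a k) / S)))"
    unfolding H_def A_def S_def using fin w0 w1 by (rule sum_weighted_ln_div_softmax[symmetric])
  finally show ?thesis unfolding H_def S_def .
qed

lemma abs_ln_weighted_sum_le:
  fixes w c :: "'i \<Rightarrow> real"
  assumes fin: "finite I" and w0: "\<And>k. k \<in> I \<Longrightarrow> 0 \<le> w k" and w1: "(\<Sum>k\<in>I. w k) = 1"
    and c: "\<And>k. k \<in> I \<Longrightarrow> 0 < c k"
  shows "\<bar>ln (\<Sum>k\<in>I. w k * c k)\<bar> \<le> (\<Sum>k\<in>I. \<bar>ln (c k)\<bar>)"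
proof -
  define B where "B = (\<Sum>k\<in>I. \<bar>ln (c k)\<bar>)"
  have c_bounds: "exp (- B) \<le> c k \<and> c k \<le> exp B" if k: "k \<in> I" for k
  proof -
    have "\<bar>ln (c k)\<bar> \<le> B"
      unfolding B_def using fin k by (intro member_le_sum) auto
    then have "exp (- B) \<le> exp (ln (c k)) \<and> exp (ln (c k)) \<le> exp B" by (simp add: abs_le_iff)
    then show ?thesis using c[OF k] by simp
  qed
  have weighted_const: "(\<Sum>k\<in>I. w k * t) = t" for t
    using w1 by (simp flip: sum_distrib_right)
  have "exp (- B) \<le> (\<Sum>k\<in>I. w k * c k)"
    using c_bounds w0 by (subst weighted_const[symmetric]) (auto intro!: sum_mono mult_left_mono)
  moreover have "(\<Sum>k\<in>I. w k * c k) \<le> exp B"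
    using c_bounds w0 by (subst (2) weighted_const[symmetric]) (auto intro!: sum_mono mult_left_mono)
  ultimately have "- B \<le> ln (\<Sum>k\<in>I. w k * c k) \<and> ln (\<Sum>k\<in>I. w k * c k) \<le> B"
    by (metis exp_gt_zero ln_exp ln_le_cancel_iff order.strict_trans2)
  then show ?thesis unfolding B_def by linarith
qed

lemma integral_neg_ln_weighted_sum_le:
  fixes M :: "'a measure" and w :: "'i \<Rightarrow> real" and p :: "'i \<Rightarrow> 'a \<Rightarrow> real"
  assumes fin: "finite I" and w0: "\<And>k. k \<in> I \<Longrightarrow> 0 \<le> w k" and w1: "(\<Sum>k\<in>I. w k) = 1"
    and meas: "\<And>k. k \<in> I \<Longrightarrow> p k \<in> borel_measurable M"
    and pos: "\<And>k x. k \<in> I \<Longrightarrow> x \<in> space M \<Longrightarrow> 0 < p k x"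
    and int: "\<And>k. k \<in> I \<Longrightarrow> integrable M (\<lambda>x. ln (p k x))"
  shows "(\<integral>x. - ln (\<Sum>k\<in>I. w k * p k x) \<partial>M) \<le> (\<Sum>k\<in>I. w k * (\<integral>x. - ln (p k x) \<partial>M))"
proof -
  have "integrable M (\<lambda>x. ln (\<Sum>k\<in>I. w k * p k x))"
  proof (rule Bochner_Integration.integrable_bound)
    show "integrable M (\<lambda>x. \<Sum>k\<in>I. \<bar>ln (p k x)\<bar>)" using int by auto
    show "(\<lambda>x. ln (\<Sum>k\<in>I. w k * p k x)) \<in> borel_measurable M" using meas by measurable
    show "AE x in M. norm (ln (\<Sum>k\<in>I. w k * p k x)) \<le> norm (\<Sum>k\<in>I. \<bar>ln (p k x)\<bar>)"
      using fin w0 w1 pos by (intro AE_I2) (simp add: abs_ln_weighted_sum_le)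
  qed
  then have "(\<integral>x. - ln (\<Sum>k\<in>I. w k * p k x) \<partial>M) \<le> (\<integral>x. (\<Sum>k\<in>I. w k * - ln (p k x)) \<partial>M)"
    using int weighted_ln_le_ln_weighted_sum[OF fin w0 w1] pos
    by (intro integral_mono) (auto simp: sum_negf)
  also have "\<dots> = (\<Sum>k\<in>I. w k * (\<integral>x. - ln (p k x) \<partial>M))"
    using int by (simp add: Bochner_Integration.integral_sum)
  finally show ?thesis .
qed

lemma (in prob_space) prob_le_expectation_div_ge:
  fixes Z :: "'a \<Rightarrow> real"
  assumes int: "integrable M Z" and nonneg: "AE x in M. 0 \<le> Z x" and "0 < \<delta>"
  shows "1 - \<delta> \<le> prob {x \<in> space M. Z x \<le> expectation Z / \<delta>}"
proof (cases "expectation Z = 0")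
  case True
  then have "AE x in M. Z x \<le> expectation Z / \<delta>"
    using integral_nonneg_eq_0_iff_AE[OF int nonneg] by auto
  then have "prob {x \<in> space M. Z x \<le> expectation Z / \<delta>} = 1"
    using int by (intro prob_Collect_eq_1[THEN iffD2]) auto
  then show ?thesis using \<open>0 < \<delta>\<close> by simp
next
  case False
  define c where "c = expectation Z / \<delta>"
  have "0 < c"
    using False integral_nonneg_AE[OF nonneg] \<open>0 < \<delta>\<close> unfolding c_def by simp
  have events: "{x \<in> space M. Z x \<le> c} \<in> events" using int by measurable
  have "1 - prob {x \<in> space M. Z x \<le> c} = prob (space M - {x \<in> space M. Z x \<le> c})"
    using prob_compl[OF events] by simp
  also have "\<dots> \<le> prob {x \<in> space M. c \<le> Z x}"
    using int by (intro finite_measure_mono) auto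
  also have "\<dots> \<le> expectation Z / c"
    by (rule integral_Markov_inequality_measure[OF int events nonneg \<open>0 < c\<close>])
  also have "\<dots> = \<delta>"
    using False \<open>0 < \<delta>\<close> unfolding c_def by simp
  finally show ?thesis unfolding c_def by simp
qed

lemma overfit_min_mult_le:
  assumes "k < K" and "0 < (\<Sum>i<n. - ln (p k (y i)))"
  shows "overfit_min K n p y yt * (\<Sum>i<n. - ln (p k (y i))) \<le> (\<Sum>i<n. - ln (p k (yt i)))"
proof -
  have "overfit_min K n p y yt \<le> overfit_ratio n p y yt k"
    unfolding overfit_min_def using assms(1) by (intro Min_le) auto
  then show ?thesis using assms(2) by (simp add: overfit_ratio_def le_divide_eq)
qed

lemma mixture_risk_le_ln_sum_phi_integrand:
  fixes Q :: "'a measure" and p :: "nat \<Rightarrow> 'a \<Rightarrow> real"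
  assumes "\<forall>k<K. p k \<in> borel_measurable Q"
    and "\<forall>k<K. \<forall>x. 0 < p k x"
    and "\<forall>k<K. integrable Q (\<lambda>x. ln (p k x))"
    and "\<forall>k<K. (\<Sum>i<n. - ln (p k (y i))) > 0"
    and w: "w \<in> prob_simplex K" and m: "1 < overfit_min K n p y yt"
  shows "real n * (\<integral>x. - ln (\<Sum>k<K. w k * p k x) \<partial>Q)
    \<le> overfit_min K n p y yt / (overfit_min K n p y yt - 1)
        * (\<Sum>k<K. w k * ln (w k / w_op K n p y yt k))
      - 1 / (overfit_min K n p y yt - 1) * (\<Sum>k<K. w k * ln (w k))
      - overfit_min K n p y yt / (overfit_min K n p y yt - 1)
        * ln (\<Sum>k<K. exp (- optimism n p y yt k))
      + ln (\<Sum>k<K. phi_integrand Q n p k yt)"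
proof -
  define T where "T k = (\<Sum>i<n. - ln (p k (yt i)))" for k
  define L where "L k = (\<Sum>i<n. - ln (p k (y i)))" for k
  define R where "R k = real n * (\<integral>x. - ln (p k x) \<partial>Q)" for k
  have optimism: "optimism n p y yt k = T k - L k" for k
    by (simp add: optimism_def T_def L_def sum_negf)
  have ratio: "overfit_min K n p y yt * L k \<le> T k" if "k < K" for k
    unfolding T_def L_def using that assms(4) by (intro overfit_min_mult_le) auto
  have phi_integrand: "phi_integrand Q n p k yt = exp (R k - T k)" for k
    by (simp add: phi_integrand_def R_def T_def sum_negf)
  have "(\<integral>x. - ln (\<Sum>k<K. w k * p k x) \<partial>Q) \<le> (\<Sum>k<K. w k * (\<integral>x. - ln (p k x) \<partial>Q))"
    using assms(1-3) w by (intro integral_neg_ln_weighted_sum_le) (auto simp: prob_simplex_def)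
  then have "real n * (\<integral>x. - ln (\<Sum>k<K. w k * p k x) \<partial>Q)
      \<le> real n * (\<Sum>k<K. w k * (\<integral>x. - ln (p k x) \<partial>Q))"
    by (rule mult_left_mono) simp
  also have "\<dots> = (\<Sum>k<K. w k * R k)"
    by (simp add: R_def sum_distrib_left mult.left_commute)
  also have "\<dots> \<le> overfit_min K n p y yt / (overfit_min K n p y yt - 1)
        * (\<Sum>k<K. w k * ln (w k / w_op K n p y yt k))
      - 1 / (overfit_min K n p y yt - 1) * (\<Sum>k<K. w k * ln (w k))
      - overfit_min K n p y yt / (overfit_min K n p y yt - 1)
        * ln (\<Sum>k<K. exp (- optimism n p y yt k))
      + ln (\<Sum>k<K. exp (R k - T k))"
    unfolding w_op_def using w m optimism ratio
    by (intro weighted_sum_le_softmax_divergence_bound[where L = L]) (auto simp: prob_simplex_def)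
  finally show ?thesis by (simp only: phi_integrand)
qed

theorem theorem3p4:
  fixes Q :: "'a measure" and K n :: nat
    and p :: "nat \<Rightarrow> 'a \<Rightarrow> real" and y :: "nat \<Rightarrow> 'a" and \<delta> :: real
  assumes "prob_space Q"
    and "K \<ge> 1" and "n \<ge> 1"
    and "\<forall>k<K. p k \<in> borel_measurable Q"
    and "\<forall>k<K. \<forall>x. 0 < p k x"
    and "\<forall>k<K. integrable Q (\<lambda>x. ln (p k x))"
    and "\<forall>k<K. integrable (PiM {..<n} (\<lambda>_. Q)) (phi_integrand Q n p k)"
    and "\<forall>k<K. (\<Sum>i<n. - ln (p k (y i))) > 0"
    and "0 < \<delta>" and "\<delta> \<le> 1"
  shows "\<exists>A \<in> sets (PiM {..<n} (\<lambda>_. Q)).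
           measure (PiM {..<n} (\<lambda>_. Q)) A \<ge> 1 - \<delta> \<and>
           (\<forall>yt \<in> A. overfit_min K n p y yt > 1 \<longrightarrow>
              (\<forall>w \<in> prob_simplex K.
                 real n * (\<integral>x. - ln (\<Sum>k<K. w k * p k x) \<partial>Q)
                 \<le> overfit_min K n p y yt / (overfit_min K n p y yt - 1)
                      * (\<Sum>k<K. w k * ln (w k / w_op K n p y yt k))
                   - 1 / (overfit_min K n p y yt - 1) * (\<Sum>k<K. w k * ln (w k))
                   + ln (real K)
                   - overfit_min K n p y yt / (overfit_min K n p y yt - 1)
                      * ln (\<Sum>k<K. exp (- optimism n p y yt k))
                   - ln \<delta>
                   + phi_term Q K n p))"
proof -
  define M where "M = PiM {..<n} (\<lambda>_. Q)"
  interpret M: prob_space M unfolding M_def using assms(1) by (intro prob_space_PiM)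
  define Z where "Z yt = (\<Sum>k<K. phi_integrand Q n p k yt)" for yt
  have Z_int: "integrable M Z" unfolding Z_def M_def using assms(7) by auto
  have Z_pos: "0 < Z yt" for yt
    unfolding Z_def phi_integrand_def using assms(2) by (intro sum_pos) (auto simp: lessThan_empty_iff)
  define A where "A = {yt \<in> space M. Z yt \<le> M.expectation Z / \<delta>}"
  have A_sets: "A \<in> sets M" unfolding A_def using Z_int by measurable
  have A_measure: "1 - \<delta> \<le> measure M A"
    unfolding A_def using Z_int Z_pos assms(9)
    by (intro M.prob_le_expectation_div_ge) (auto intro: less_imp_le)
  have ln_Z: "ln (Z yt) \<le> ln (real K) + phi_term Q K n p - ln \<delta>" if "yt \<in> A" for yt
  proof -
    have "0 < M.expectation Z / \<delta>"
      using Z_pos[of yt] that by (auto simp: A_def intro: order.strict_trans2)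
    then have "0 < M.expectation Z" using assms(9) by (simp add: zero_less_divide_iff)
    moreover have "M.expectation Z = (\<Sum>k<K. \<integral>yt. phi_integrand Q n p k yt \<partial>M)"
      unfolding Z_def using assms(7) by (simp add: M_def Bochner_Integration.integral_sum)
    moreover have "ln (Z yt) \<le> ln (M.expectation Z / \<delta>)"
      using Z_pos[of yt] that by (simp add: A_def)
    ultimately show ?thesis
      using assms(2,9) by (simp add: phi_term_def M_def ln_mult ln_div)
  qed
  show ?thesis
    unfolding M_def[symmetric]
    using A_sets A_measure ln_Z mixture_risk_le_ln_sum_phi_integrand[OF assms(4-6,8)]
    unfolding Z_def by (intro bexI[of _ A] conjI ballI impI) fastforce+
qed

end
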